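(* Let $FAF=\langle\mathcal A,\rho\rangle$ be a fuzzy argumentation framework and $E\subseteq\mathcal A$. For every $C\subseteq\mathcal A$: $E\in\mathcal{PE}(FAF,C)$ if and only if for every $S\in SCCS_{FAF}$, $$E\cap S\in\mathcal{PE}\big(FAF\downarrow_{R_{FAF}(S,E)},\,D_{FAF}(S,E)\cap C\big).$$
   Context: Fuzzy sets: a fuzzy set on a crisp set $X$ is a map $S:X\to[0,1]$; $S\subseteq S'$ means $S(x)\le S'(x)$ for all $x$; $\cap,\cup$ are pointwise $\min,\max$; $\mathrm{Supp}(S)=\{x:S(x)>0\}$. A fuzzy point $(x,a)$, $a\in(0,1]$, has value $a$ at $x$ and $0$ elsewhere; $(x,a)\in S$ means $a\le S(x)$. $a*b=\min\{a,b\}$. A fuzzy argumentation framework (FAF) is $\langle\mathcal A,\rho\rangle$ with $\mathrm{Args}$ a crisp set, $\mathcal A$ a fuzzy set on $\mathrm{Args}$, $\rho:\mathrm{Args}\times\mathrm{Args}\to[0,1]$, $\rho_{AB}=\rho(A,B)$; $A$ attacks $B$ iff $\rho_{AB}>0$. Fuzzy arguments are fuzzy points $(A,a)\in\mathcal A$. An attack of $(A,a)$ on $(B,b)$ is tolerable if $\min\{a,\rho_{AB}\}+b\le1$, sufficient otherwise. $(A,a)$ weakens $(B,b)$ to $(B,b')$, $b'=\min\{1-\min\{a,\rho_{AB}\},b\}$. $T\subseteq\mathcal A$ weakening defends $(C,c)$ if for every fuzzy argument $(B,b)$ sufficiently attacking $(C,c)$ there is $(A',a')\in T$ weakening $(B,b)$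 to some $(B,b')$ which tolerably attacks $(C,c)$. $T$ is conflict-free if no $(A,a),(B,b)\in T$ with $(A,a)$ sufficiently attacking $(B,b)$; admissible if conflict-free and it weakening defends every element of $T$. For $C\subseteq\mathcal A$: $\mathcal{AE}(FAF,C)$ is the set of admissible $E$ with $E\subseteq C$; $\mathcal{PE}(FAF,C)$ (preferred extensions in $C$) is the set of maximal elements of $\mathcal{AE}(FAF,C)$ with respect to $\subseteq$. Path-equivalence on $\mathrm{Args}$: $A\sim B$ iff $A=B$ or there are chains of attacks from $A$ to $B$ and from $B$ to $A$. $SCC_{FAF}(A)$ is the fuzzy set with value $\mathcal A(B)$ at each $B\sim A$, $0$ elsewhere; $SCCS_{FAF}$ is the set of these. $outparents_{FAF}(S)$ is the fuzzy set of $(B,\mathcal A(B))$ with $B\notin\mathrm{Supp}(S)$ attacking some argument of $\mathrm{Supp}(S)$. For $T\subseteq\mathcal A$, $FAF\downarrow_T=\langle T,\rho|_{\mathrm{Supp}(T)\times\mathrm{Supp}(T)}\rangle$, and notions in $FAF\downarrow_T$ refer to its own fuzzy arguments and attacks. For $E\subseteq\mathcal A$, $S\in SCCS_{FAF}$: $L_{FAF}(S,E)(A)=\max_B\big((E\cap outparents_{FAF}(S))(B)*\rho_{BA}\big)$ for $A\in\mathrm{Supp}(S)$, $0$ elsewhere; $R_{FAF}(S,E)(A)=\min\{\mathcal A(A),1-L_{FAF}(S,E)(A)\}$ for $A\in\mathrm{Supp}(S)$, $0$ elsewhere; $D_{FAF}(S,E)$ is the union of fuzzy points $(A,a)\in R_{FAF}(S,E)$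 such that for every $(B,b)\in outparents_{FAF}(S)$ sufficiently attacking $(A,a)$ there is $(C,c)\in E$ weakening $(B,b)$ to some $(B,b')$ which tolerably attacks $(A,a)$. *)

theory Defs
  imports Complex_Main
begin

(* Fuzzy sets on the crisp set of arguments (the type 'a) are maps 'a => real
   with values in [0,1]. *)
type_synonym 'a fset = "'a \<Rightarrow> real"
type_synonym 'a attrel = "'a \<Rightarrow> 'a \<Rightarrow> real"

definition is_fuzzy_set :: "'a fset \<Rightarrow> bool" where
  "is_fuzzy_set S \<longleftrightarrow> (\<forall>x. 0 \<le> S x \<and> S x \<le> 1)"

definition fsubset :: "'a fset \<Rightarrow> 'a fset \<Rightarrow> bool" where
  "fsubset S S' \<longleftrightarrow> (\<forall>x. S x \<le> S' x)"

definition finter :: "'a fset \<Rightarrow> 'a fset \<Rightarrow> 'a fset" where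
  "finter S S' = (\<lambda>x. min (S x) (S' x))"

definition Supp :: "'a fset \<Rightarrow> 'a set" where
  "Supp S = {x. S x > 0}"

definition fpt_in :: "'a \<times> real \<Rightarrow> 'a fset \<Rightarrow> bool" where
  "fpt_in p S \<longleftrightarrow> (0 < snd p \<and> snd p \<le> 1 \<and> snd p \<le> S (fst p))"

definition is_FAF :: "'a fset \<Rightarrow> 'a attrel \<Rightarrow> bool" where
  "is_FAF Ar \<rho> \<longleftrightarrow> is_fuzzy_set Ar \<and> (\<forall>x y. 0 \<le> \<rho> x y \<and> \<rho> x y \<le> 1)"

definition suff_att :: "'a attrel \<Rightarrow> 'a \<times> real \<Rightarrow> 'a \<times> real \<Rightarrow> bool" where
  "suff_att \<rho> p q \<longleftrightarrow> \<rho> (fst p) (fst q) > 0 \<and> min (snd p) (\<rho> (fst p) (fst q)) + snd q > 1"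

definition tol_att :: "'a attrel \<Rightarrow> 'a \<times> real \<Rightarrow> 'a \<times> real \<Rightarrow> bool" where
  "tol_att \<rho> p q \<longleftrightarrow> \<rho> (fst p) (fst q) > 0 \<and> min (snd p) (\<rho> (fst p) (fst q)) + snd q \<le> 1"

definition weaken :: "'a attrel \<Rightarrow> 'a \<times> real \<Rightarrow> 'a \<times> real \<Rightarrow> 'a \<times> real" where
  "weaken \<rho> p q = (fst q, min (1 - min (snd p) (\<rho> (fst p) (fst q))) (snd q))"

definition wdefends :: "'a fset \<Rightarrow> 'a attrel \<Rightarrow> 'a fset \<Rightarrow> 'a \<times> real \<Rightarrow> bool" where
  "wdefends Ar \<rho> T c \<longleftrightarrow>
     (\<forall>b. fpt_in b Ar \<and> suff_att \<rho> b c \<longrightarrow>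
        (\<exists>a'. fpt_in a' T \<and> tol_att \<rho> (weaken \<rho> a' b) c))"

definition conflict_free :: "'a attrel \<Rightarrow> 'a fset \<Rightarrow> bool" where
  "conflict_free \<rho> T \<longleftrightarrow> \<not> (\<exists>p q. fpt_in p T \<and> fpt_in q T \<and> suff_att \<rho> p q)"

definition admissible :: "'a fset \<Rightarrow> 'a attrel \<Rightarrow> 'a fset \<Rightarrow> bool" where
  "admissible Ar \<rho> T \<longleftrightarrow> is_fuzzy_set T \<and> fsubset T Ar \<and> conflict_free \<rho> T \<and>
     (\<forall>c. fpt_in c T \<longrightarrow> wdefends Ar \<rho> T c)"

definition AE :: "'a fset \<Rightarrow> 'a attrel \<Rightarrow> 'a fset \<Rightarrow> 'a fset set" where
  "AE Ar \<rho> C = {E. admissible Ar \<rho> E \<and> fsubset E C}"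

definition PE :: "'a fset \<Rightarrow> 'a attrel \<Rightarrow> 'a fset \<Rightarrow> 'a fset set" where
  "PE Ar \<rho> C = {E \<in> AE Ar \<rho> C. \<forall>E' \<in> AE Ar \<rho> C. fsubset E E' \<longrightarrow> E' = E}"

definition att_rel :: "'a attrel \<Rightarrow> ('a \<times> 'a) set" where
  "att_rel \<rho> = {(x, y). \<rho> x y > 0}"

definition path_equiv :: "'a attrel \<Rightarrow> 'a \<Rightarrow> 'a \<Rightarrow> bool" where
  "path_equiv \<rho> A B \<longleftrightarrow> A = B \<or> ((A, B) \<in> (att_rel \<rho>)\<^sup>+ \<and> (B, A) \<in> (att_rel \<rho>)\<^sup>+)"

definition SCC :: "'a fset \<Rightarrow> 'a attrel \<Rightarrow> 'a \<Rightarrow> 'a fset" where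
  "SCC Ar \<rho> A = (\<lambda>B. if path_equiv \<rho> B A then Ar B else 0)"

definition SCCS :: "'a fset \<Rightarrow> 'a attrel \<Rightarrow> 'a fset set" where
  "SCCS Ar \<rho> = range (SCC Ar \<rho>)"

definition outparents :: "'a fset \<Rightarrow> 'a attrel \<Rightarrow> 'a fset \<Rightarrow> 'a fset" where
  "outparents Ar \<rho> S =
     (\<lambda>B. if B \<notin> Supp S \<and> (\<exists>A \<in> Supp S. \<rho> B A > 0) then Ar B else 0)"

definition restr :: "'a attrel \<Rightarrow> 'a fset \<Rightarrow> 'a attrel" where
  "restr \<rho> T = (\<lambda>x y. if x \<in> Supp T \<and> y \<in> Supp T then \<rho> x y else 0)"

(* L, R, D; the arguments are assumed finite, so the maximum exists *)
definition Lf :: "'a fset \<Rightarrow> 'a attrel \<Rightarrow> 'a fset \<Rightarrow> 'a fset \<Rightarrow> 'a fset" where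
  "Lf Ar \<rho> S E = (\<lambda>A. if A \<in> Supp S
      then Max (range (\<lambda>B. min (finter E (outparents Ar \<rho> S) B) (\<rho> B A))) else 0)"

definition Rf :: "'a fset \<Rightarrow> 'a attrel \<Rightarrow> 'a fset \<Rightarrow> 'a fset \<Rightarrow> 'a fset" where
  "Rf Ar \<rho> S E = (\<lambda>A. if A \<in> Supp S then min (Ar A) (1 - Lf Ar \<rho> S E A) else 0)"

definition D_good :: "'a fset \<Rightarrow> 'a attrel \<Rightarrow> 'a fset \<Rightarrow> 'a fset \<Rightarrow> 'a \<times> real \<Rightarrow> bool" where
  "D_good Ar \<rho> S E p \<longleftrightarrow> fpt_in p (Rf Ar \<rho> S E) \<and>
     (\<forall>b. fpt_in b (outparents Ar \<rho> S) \<and> suff_att \<rho> b p \<longrightarrow>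
        (\<exists>c. fpt_in c E \<and> tol_att \<rho> (weaken \<rho> c b) p))"

(* union of the fuzzy points satisfying D_good (pointwise supremum; 0 if none) *)
definition Df :: "'a fset \<Rightarrow> 'a attrel \<Rightarrow> 'a fset \<Rightarrow> 'a fset \<Rightarrow> 'a fset" where
  "Df Ar \<rho> S E = (\<lambda>A. if {a. D_good Ar \<rho> S E (A, a)} = {} then 0
                        else Sup {a. D_good Ar \<rho> S E (A, a)})"

end

theory Submission
  imports Defs
begin

(* Against a sufficient attack of (B, b) on (A, a), weakening (B, b) by (C, c) makes the attack
   tolerable iff a \<le> min c \<rho>(C, B).  A set E of fuzzy arguments
   interacts with a strongly connected component S only through the outparents of S: their attacks
   by E cap the degrees inside S at R(S, E) = min(Ar, 1 - L(S, E)), and E's defence against them is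
   recorded by D(S, E).  Hence E is admissible iff every E \<inter> S is admissible in the framework
   restricted to R(S, E) and lies below D(S, E).

   Maximality transfers in both directions.  An admissible T \<supseteq> E \<inter> S of the component glues
   with E outside S to an admissible extension of E.  Conversely, if E' \<supset> E is admissible, pick
   an argument X where they differ that is minimal in the condensation order (well-founded since
   the arguments are finite).  E and E' agree upstream of X, so R and D of the component of X are
   the same for both, and E' \<inter> S strictly extends E \<inter> S there. *)

section \<open>Weakenings and restricted frameworks\<close>

lemma fpt_in_mono: "fpt_in p T \<Longrightarrow> fsubset T F \<Longrightarrow> fpt_in p F"
  by (auto simp: fpt_in_def fsubset_def intro: order_trans)

lemma fpt_in_Supp: "fpt_in p T \<Longrightarrow> fst p \<in> Supp T"
  by (auto simp: fpt_in_def Supp_def)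

lemma conflict_free_mono: "conflict_free \<rho> E \<Longrightarrow> fsubset T E \<Longrightarrow> conflict_free \<rho> T"
  unfolding conflict_free_def using fpt_in_mono by blast

lemma wdefends_mono: "wdefends Ar \<rho> T p \<Longrightarrow> fsubset T F \<Longrightarrow> wdefends Ar \<rho> F p"
  unfolding wdefends_def using fpt_in_mono by blast

lemma tol_att_weaken_iff:
  assumes "suff_att \<rho> b p"
  shows "tol_att \<rho> (weaken \<rho> c b) p \<longleftrightarrow> snd p \<le> min (snd c) (\<rho> (fst c) (fst b))"
  using assms by (auto simp: suff_att_def tol_att_def weaken_def min_def)

lemma suff_att_by_weakener:
  assumes "suff_att \<rho> b p" "0 < snd p" "snd p \<le> min (snd c) (\<rho> (fst c) (fst b))"
  shows "suff_att \<rho> c b"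
  using assms by (auto simp: suff_att_def)

lemma wdefends_iff:
  "wdefends Ar \<rho> T p \<longleftrightarrow>
     (\<forall>b. fpt_in b Ar \<and> suff_att \<rho> b p \<longrightarrow>
        (\<exists>c. fpt_in c T \<and> snd p \<le> min (snd c) (\<rho> (fst c) (fst b))))"
  by (auto simp: wdefends_def tol_att_weaken_iff)

lemma D_good_iff:
  "D_good Ar \<rho> S E p \<longleftrightarrow> fpt_in p (Rf Ar \<rho> S E) \<and>
     (\<forall>b. fpt_in b (outparents Ar \<rho> S) \<and> suff_att \<rho> b p \<longrightarrow>
        (\<exists>c. fpt_in c E \<and> snd p \<le> min (snd c) (\<rho> (fst c) (fst b))))"
  by (auto simp: D_good_def tol_att_weaken_iff)

lemma restr_eq: "x \<in> Supp T \<Longrightarrow> y \<in> Supp T \<Longrightarrow> restr \<rho> T x y = \<rho> x y"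
  by (simp add: restr_def)

lemma suff_att_restr:
  "fst p \<in> Supp T \<Longrightarrow> fst q \<in> Supp T \<Longrightarrow> suff_att (restr \<rho> T) p q \<longleftrightarrow> suff_att \<rho> p q"
  by (simp add: suff_att_def restr_eq)

lemma tol_att_weaken_restr:
  "fst c \<in> Supp T \<Longrightarrow> fst b \<in> Supp T \<Longrightarrow> fst p \<in> Supp T \<Longrightarrow>
    tol_att (restr \<rho> T) (weaken (restr \<rho> T) c b) p \<longleftrightarrow> tol_att \<rho> (weaken \<rho> c b) p"
  by (simp add: tol_att_def weaken_def restr_eq)

lemma admissible_restr:
  assumes "fsubset T R"
  shows "admissible R (restr \<rho> R) T \<longleftrightarrow> admissible R \<rho> T"
proof -
  have inR: "fst p \<in> Supp R" if "fpt_in p T" for p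
    using that assms fpt_in_Supp fpt_in_mono by blast
  have "conflict_free (restr \<rho> R) T \<longleftrightarrow> conflict_free \<rho> T"
    unfolding conflict_free_def using suff_att_restr inR by blast
  moreover have "wdefends R (restr \<rho> R) T c \<longleftrightarrow> wdefends R \<rho> T c" if "fpt_in c T" for c
    unfolding wdefends_def using that inR fpt_in_Supp suff_att_restr tol_att_weaken_restr
    by (smt (verit))
  ultimately show ?thesis
    using assms by (auto simp: admissible_def)
qed

section \<open>Components and their data L, R, D\<close>

locale finite_faf =
  fixes Ar :: "'a fset" and \<rho> :: "'a attrel"
  assumes finite_args: "finite (UNIV :: 'a set)"
    and is_faf: "is_FAF Ar \<rho>"
begin

abbreviation "SC X \<equiv> SCC Ar \<rho> X"
abbreviation "OP X \<equiv> outparents Ar \<rho> (SC X)"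
abbreviation "RR X E \<equiv> Rf Ar \<rho> (SC X) E"
abbreviation "DF X E \<equiv> Df Ar \<rho> (SC X) E"

lemma Ar_nonneg: "0 \<le> Ar x"
  using is_faf by (auto simp: is_FAF_def is_fuzzy_set_def)

lemma rho_le_1: "\<rho> x y \<le> 1"
  using is_faf by (auto simp: is_FAF_def)

lemma Supp_SCC: "Supp (SC X) = {B. path_equiv \<rho> B X \<and> 0 < Ar B}"
  by (auto simp: Supp_def SCC_def)

lemma finter_SCC:
  assumes "is_fuzzy_set E" "fsubset E Ar"
  shows "finter E (SC X) B = (if B \<in> Supp (SC X) then E B else 0)"
proof -
  have "0 \<le> E B" "E B \<le> Ar B"
    using assms by (auto simp: is_fuzzy_set_def fsubset_def)
  then show ?thesis
    by (auto simp: finter_def SCC_def Supp_def min_def)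
qed

lemma fpt_in_finter_SCC_iff:
  assumes "is_fuzzy_set E" "fsubset E Ar"
  shows "fpt_in (x, v) (finter E (SC X)) \<longleftrightarrow> fpt_in (x, v) E \<and> x \<in> Supp (SC X)"
  using finter_SCC[OF assms, of X x] by (auto simp: fpt_in_def)

lemma in_own_SCC: "0 < Ar x \<Longrightarrow> x \<in> Supp (SC x)"
  by (simp add: Supp_SCC path_equiv_def)

lemma finter_own_SCC:
  assumes "is_fuzzy_set E" "fsubset E Ar"
  shows "finter E (SC x) x = E x"
proof -
  have "0 \<le> E x" "E x \<le> Ar x"
    using assms by (auto simp: is_fuzzy_set_def fsubset_def)
  then show ?thesis
    using finter_SCC[OF assms, of x x] in_own_SCC[of x] by (cases "0 < Ar x") auto
qed

lemma outparents_le: "outparents Ar \<rho> S B \<le> Ar B"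
  using Ar_nonneg by (simp add: outparents_def)

lemma outparents_eq:
  "B \<notin> Supp S \<Longrightarrow> A \<in> Supp S \<Longrightarrow> 0 < \<rho> B A \<Longrightarrow> outparents Ar \<rho> S B = Ar B"
  by (auto simp: outparents_def)

lemma outparents_posD:
  assumes "0 < outparents Ar \<rho> S B"
  shows "B \<notin> Supp S" "outparents Ar \<rho> S B = Ar B" "\<exists>A \<in> Supp S. 0 < \<rho> B A"
  using assms by (auto simp: outparents_def split: if_splits)

lemma Max_range_attained: "\<exists>x. Max (range (f :: 'a \<Rightarrow> real)) = f x"
proof -
  have "Max (range f) \<in> range f"
    using finite_args by (intro Max_in) simp_all
  then show ?thesis
    by auto
qed

lemma Lf_ge_outside:
  assumes "B \<notin> Supp S" "A \<in> Supp S" "0 < \<rho> B A" "fsubset E Ar"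
  shows "min (E B) (\<rho> B A) \<le> Lf Ar \<rho> S E A"
proof -
  have "finter E (outparents Ar \<rho> S) B = E B"
    using assms outparents_eq by (simp add: finter_def fsubset_def min_absorb1)
  then show ?thesis
    using assms(2) finite_args unfolding Lf_def by (metis (mono_tags, lifting) Max_ge finite_imageI rangeI)
qed

lemma Lf_cases:
  "Lf Ar \<rho> S E A = 0 \<or> (\<exists>B. Lf Ar \<rho> S E A = min (finter E (outparents Ar \<rho> S) B) (\<rho> B A))"
  unfolding Lf_def using Max_range_attained by auto

lemma Lf_attained:
  assumes "fsubset E Ar" "0 < Lf Ar \<rho> S E A"
  shows "\<exists>B. Lf Ar \<rho> S E A = min (E B) (\<rho> B A)"
proof -
  obtain B where B: "Lf Ar \<rho> S E A = min (finter E (outparents Ar \<rho> S) B) (\<rho> B A)"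
    using assms(2) Lf_cases[of S E A] by auto
  then have "0 < outparents Ar \<rho> S B"
    using assms(2) by (simp add: finter_def)
  then have "finter E (outparents Ar \<rho> S) B = E B"
    using assms(1) outparents_posD(2)[of S B] by (simp add: finter_def fsubset_def)
  then show ?thesis
    using B by auto
qed

lemma Lf_le_1: "Lf Ar \<rho> S E A \<le> 1"
  using Lf_cases[of S E A] rho_le_1 by (metis min.coboundedI2 zero_less_one order_less_imp_le)

lemma Rf_le: "Rf Ar \<rho> S E A \<le> Ar A"
  using Ar_nonneg[of A] by (simp add: Rf_def)

lemma Rf_posD: "0 < Rf Ar \<rho> S E A \<Longrightarrow> A \<in> Supp S"
  by (auto simp: Rf_def split: if_splits)

lemma fsubset_Rf_outside:
  assumes "fsubset T (Rf Ar \<rho> S E)" "is_fuzzy_set T" "x \<notin> Supp S"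
  shows "T x = 0"
proof -
  have "T x \<le> Rf Ar \<rho> S E x" "0 \<le> T x"
    using assms(1,2) by (auto simp: fsubset_def is_fuzzy_set_def)
  then show ?thesis
    using assms(3) by (simp add: Rf_def)
qed

lemma fpt_in_outparents_imp_Ar: "fpt_in p (outparents Ar \<rho> S) \<Longrightarrow> fpt_in p Ar"
  using outparents_le by (auto simp: fpt_in_def intro: order_trans)

lemma fpt_in_Rf_imp_Ar: "fpt_in p (Rf Ar \<rho> S E) \<Longrightarrow> fpt_in p Ar"
  using Rf_le by (auto simp: fpt_in_def intro: order_trans)


definition strongest_weakening :: "'a fset \<Rightarrow> 'a \<Rightarrow> real" where
  "strongest_weakening E B = Max (range (\<lambda>C. min (E C) (\<rho> C B)))"

lemma ex_weakener_iff:
  assumes "is_fuzzy_set E" "0 < a"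
  shows "(\<exists>c. fpt_in c E \<and> a \<le> min (snd c) (\<rho> (fst c) B)) \<longleftrightarrow> a \<le> strongest_weakening E B"
proof
  assume "\<exists>c. fpt_in c E \<and> a \<le> min (snd c) (\<rho> (fst c) B)"
  then obtain C cv where "fpt_in (C, cv) E" "a \<le> min cv (\<rho> C B)"
    by auto
  then have "a \<le> min (E C) (\<rho> C B)"
    by (auto simp: fpt_in_def)
  also have "\<dots> \<le> strongest_weakening E B"
    unfolding strongest_weakening_def using finite_args by (intro Max_ge) simp_all
  finally show "a \<le> strongest_weakening E B" .
next
  assume a: "a \<le> strongest_weakening E B"
  obtain C where "strongest_weakening E B = min (E C) (\<rho> C B)"
    unfolding strongest_weakening_def using Max_range_attained by blast
  moreover have "E C \<le> 1"
    using assms(1) by (simp add: is_fuzzy_set_def)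
  ultimately have "fpt_in (C, a) E" "a \<le> min a (\<rho> C B)"
    using a assms(2) by (auto simp: fpt_in_def)
  then show "\<exists>c. fpt_in c E \<and> a \<le> min (snd c) (\<rho> (fst c) B)"
    by fastforce
qed

lemma D_good_iff_strongest_weakening:
  assumes "is_fuzzy_set E"
  shows "D_good Ar \<rho> S E (A, a) \<longleftrightarrow> fpt_in (A, a) (Rf Ar \<rho> S E) \<and>
     (\<forall>B bv. fpt_in (B, bv) (outparents Ar \<rho> S) \<and> suff_att \<rho> (B, bv) (A, a) \<longrightarrow>
        a \<le> strongest_weakening E B)"
proof (cases "0 < a")
  case True
  show ?thesis
    by (simp only: D_good_iff split_paired_All fst_conv snd_conv ex_weakener_iff[OF assms True])
qed (simp add: D_good_def fpt_in_def)

lemma D_good_down: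
  assumes "D_good Ar \<rho> S E (A, g)" "0 < a" "a \<le> g"
  shows "D_good Ar \<rho> S E (A, a)"
proof -
  have "suff_att \<rho> b (A, g)" if "suff_att \<rho> b (A, a)" for b
    using that assms(3) by (auto simp: suff_att_def)
  then show ?thesis
    using assms unfolding D_good_iff by (fastforce simp: fpt_in_def)
qed

(* Sufficiency of an attack on (A, a) is an open condition in a, so the good degrees at A form a
   closed interval and the union defining Df is attained. *)
lemma D_good_closed:
  assumes E: "is_fuzzy_set E" and "0 < a"
    and below: "\<And>w. 0 < w \<Longrightarrow> w < a \<Longrightarrow> D_good Ar \<rho> S E (A, w)"
  shows "D_good Ar \<rho> S E (A, a)"
  unfolding D_good_iff_strongest_weakening[OF E]
proof (intro conjI allI impI)
  have "a \<le> Rf Ar \<rho> S E A" "a \<le> 1"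
    using below by (auto intro!: dense_le_bounded[OF \<open>0 < a\<close>] simp: D_good_def fpt_in_def)
  then show "fpt_in (A, a) (Rf Ar \<rho> S E)"
    using \<open>0 < a\<close> by (simp add: fpt_in_def)
next
  fix B bv
  assume b: "fpt_in (B, bv) (outparents Ar \<rho> S) \<and> suff_att \<rho> (B, bv) (A, a)"
  let ?s = "min bv (\<rho> B A)"
  have "max 0 (1 - ?s) < a"
    using b \<open>0 < a\<close> by (simp add: suff_att_def)
  then show "a \<le> strongest_weakening E B"
  proof (rule dense_le_bounded)
    fix w
    assume w: "max 0 (1 - ?s) < w" "w < a"
    then have "suff_att \<rho> (B, bv) (A, w)"
      using b by (simp add: suff_att_def)
    then show "w \<le> strongest_weakening E B"
      using below w b unfolding D_good_iff_strongest_weakening[OF E] by auto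
  qed
qed

lemma D_good_iff_le_Df:
  assumes E: "is_fuzzy_set E" and "0 < a"
  shows "D_good Ar \<rho> S E (A, a) \<longleftrightarrow> a \<le> Df Ar \<rho> S E A"
proof -
  let ?G = "{a. D_good Ar \<rho> S E (A, a)}"
  have bdd: "bdd_above ?G"
    by (rule bdd_aboveI[of _ 1]) (auto simp: D_good_def fpt_in_def)
  show ?thesis
  proof
    assume "D_good Ar \<rho> S E (A, a)"
    then show "a \<le> Df Ar \<rho> S E A"
      using bdd by (auto simp: Df_def intro: cSup_upper)
  next
    assume "a \<le> Df Ar \<rho> S E A"
    then have ne: "?G \<noteq> {}" and "a \<le> Sup ?G"
      using \<open>0 < a\<close> by (auto simp: Df_def split: if_splits)
    have "D_good Ar \<rho> S E (A, w)" if "0 < w" "w < a" for w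
    proof -
      have "w < Sup ?G"
        using \<open>a \<le> Sup ?G\<close> \<open>w < a\<close> by linarith
      then obtain g where "g \<in> ?G" "w < g"
        using less_cSup_iff[OF ne bdd] by blast
      then show ?thesis
        using D_good_down \<open>0 < w\<close> by fastforce
    qed
    then show "D_good Ar \<rho> S E (A, a)"
      using D_good_closed[OF E \<open>0 < a\<close>] by blast
  qed
qed

lemma Df_nonneg:
  assumes "is_fuzzy_set E"
  shows "0 \<le> Df Ar \<rho> S E A"
proof (cases "\<exists>g. D_good Ar \<rho> S E (A, g)")
  case True
  then obtain g where "D_good Ar \<rho> S E (A, g)"
    by blast
  moreover have "0 < g"
    using calculation by (simp add: D_good_def fpt_in_def)
  ultimately show ?thesis
    using D_good_iff_le_Df[OF assms] by fastforce
qed (simp add: Df_def)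

(* Rf caps degrees by 1 - Lf, and Lf is the strongest attack of E from outside S. *)
lemma not_suff_att_Rf_from_outside:
  assumes "fsubset E Ar" "fpt_in (B, bv) E" "B \<notin> Supp S" "fpt_in (A, a) (Rf Ar \<rho> S E)"
  shows "\<not> suff_att \<rho> (B, bv) (A, a)"
proof
  assume att: "suff_att \<rho> (B, bv) (A, a)"
  have A: "A \<in> Supp S"
    using assms(4) Rf_posD[of S E A] by (auto simp: fpt_in_def)
  then have "a \<le> 1 - Lf Ar \<rho> S E A"
    using assms(4) by (simp add: fpt_in_def Rf_def)
  moreover have "min (E B) (\<rho> B A) \<le> Lf Ar \<rho> S E A"
    using att A assms(1,3) by (intro Lf_ge_outside) (auto simp: suff_att_def)
  moreover have "bv \<le> E B"
    using assms(2) by (simp add: fpt_in_def)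
  ultimately show False
    using att by (auto simp: suff_att_def)
qed

lemma finter_le_Rf:
  assumes E: "is_fuzzy_set E" "fsubset E Ar" and cf: "conflict_free \<rho> E"
  shows "fsubset (finter E S) (Rf Ar \<rho> S E)"
  unfolding fsubset_def
proof
  fix A
  show "finter E S A \<le> Rf Ar \<rho> S E A"
  proof (cases "A \<in> Supp S")
    case False
    then show ?thesis
      by (auto simp: finter_def Rf_def Supp_def)
  next
    case True
    have "E A \<le> 1 - Lf Ar \<rho> S E A"
    proof (rule ccontr)
      assume less: "\<not> E A \<le> 1 - Lf Ar \<rho> S E A"
      moreover have "0 \<le> E A" "E A \<le> 1"
        using E(1) by (auto simp: is_fuzzy_set_def)
      ultimately have "0 < Lf Ar \<rho> S E A" "0 < E A"
        using Lf_le_1[of S E A] by linarith+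
      then obtain B where B: "Lf Ar \<rho> S E A = min (E B) (\<rho> B A)"
        using Lf_attained[OF E(2)] by blast
      then have "suff_att \<rho> (B, E B) (A, E A)"
        using less \<open>0 < Lf Ar \<rho> S E A\<close> by (auto simp: suff_att_def)
      moreover have "fpt_in (B, E B) E" "fpt_in (A, E A) E"
        using B \<open>0 < Lf Ar \<rho> S E A\<close> \<open>0 < E A\<close> E(1) by (auto simp: fpt_in_def is_fuzzy_set_def)
      ultimately show False
        using cf by (auto simp: conflict_free_def)
    qed
    moreover have "E A \<le> Ar A"
      using E(2) by (simp add: fsubset_def)
    ultimately show ?thesis
      using True by (auto simp: finter_def Rf_def min_def)
  qed
qed

section \<open>Admissibility, component by component\<close>

lemma wdefends_from_component:
  assumes E: "is_fuzzy_set E" "fsubset E Ar"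
    and T: "admissible (Rf Ar \<rho> S E) \<rho> T" "fsubset T (Df Ar \<rho> S E)"
    and F: "fsubset E F" "fsubset T F"
    and c: "fpt_in (A, a) T"
  shows "wdefends Ar \<rho> F (A, a)"
  unfolding wdefends_iff
proof (intro allI impI)
  fix b
  assume b: "fpt_in b Ar \<and> suff_att \<rho> b (A, a)"
  obtain B bv where b_eq: "b = (B, bv)"
    by (cases b)
  have a: "0 < a" "a \<le> 1" "a \<le> T A"
    using c by (auto simp: fpt_in_def)
  have "fpt_in (A, a) (Rf Ar \<rho> S E)"
    using c T(1) fpt_in_mono by (auto simp: admissible_def)
  then have A: "A \<in> Supp S"
    using Rf_posD[of S E A] by (auto simp: fpt_in_def)
  have att: "0 < \<rho> B A" "1 < min bv (\<rho> B A) + a" "bv \<le> Ar B"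
    using b b_eq by (auto simp: suff_att_def fpt_in_def)
  have "\<exists>c. (fpt_in c E \<or> fpt_in c T) \<and> a \<le> min (snd c) (\<rho> (fst c) B)"
  proof (cases "B \<in> Supp S")
    case False
    then have "fpt_in (B, bv) (outparents Ar \<rho> S)"
      using b b_eq outparents_eq[OF False A att(1)] by (simp add: fpt_in_def)
    moreover have "D_good Ar \<rho> S E (A, a)"
      using D_good_iff_le_Df[OF E(1) a(1)] T(2) a(3) by (auto simp: fsubset_def intro: order_trans)
    ultimately show ?thesis
      using b b_eq unfolding D_good_iff by fastforce
  next
    case True
    (* Cap the attacker at r = R(B).  If the capped attack is still sufficient, T weakens it
       inside the component; otherwise r < bv forces Lf B \<ge> a, and the source of Lf B weakens it. *)
    define r where "r = Rf Ar \<rho> S E B"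
    show ?thesis
    proof (cases "0 < r \<and> 1 < min (min bv r) (\<rho> B A) + a")
      case True
      then have "fpt_in (B, min bv r) (Rf Ar \<rho> S E)" "suff_att \<rho> (B, min bv r) (A, a)"
        using b b_eq att(1) r_def by (auto simp: fpt_in_def suff_att_def)
      moreover have "wdefends (Rf Ar \<rho> S E) \<rho> T (A, a)"
        using T(1) c by (simp add: admissible_def)
      ultimately show ?thesis
        unfolding wdefends_iff by fastforce
    next
      case False
      then have "r + a \<le> 1"
        using att a by (auto simp: min_def split: if_splits)
      then have "r < bv"
        using att by (auto simp: min_def split: if_splits)
      then have "a \<le> Lf Ar \<rho> S E B"
        using \<open>r + a \<le> 1\<close> \<open>B \<in> Supp S\<close> att(3) by (auto simp: r_def Rf_def min_def split: if_splits)
      moreover obtain B' where "Lf Ar \<rho> S E B = min (E B') (\<rho> B' B)"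
        using Lf_attained[OF E(2) less_le_trans[OF a(1) calculation]] by blast
      ultimately have B': "a \<le> min (E B') (\<rho> B' B)"
        by simp
      then have "fpt_in (B', a) E"
        using a by (simp add: fpt_in_def)
      then show ?thesis
        using B' by fastforce
    qed
  qed
  then show "\<exists>c. fpt_in c F \<and> snd (A, a) \<le> min (snd c) (\<rho> (fst c) (fst b))"
    using F fpt_in_mono b_eq by fastforce
qed

lemma finter_SCC_in_AE:
  assumes E: "is_fuzzy_set E" "fsubset E Ar" and adm: "admissible Ar \<rho> E" and EC: "fsubset E C"
  shows "finter E (SC X) \<in> AE (RR X E) (restr \<rho> (RR X E)) (finter (DF X E) C)"
proof -
  let ?T = "finter E (SC X)"
  have cf: "conflict_free \<rho> E"
    using adm by (simp add: admissible_def)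
  have TE: "fsubset ?T E"
    by (simp add: fsubset_def finter_def)
  have TR: "fsubset ?T (RR X E)"
    by (rule finter_le_Rf[OF E cf])
  have T_fuzzy: "is_fuzzy_set ?T"
    using E(1) by (simp add: is_fuzzy_set_def finter_SCC[OF E])
  have defends: "wdefends (RR X E) \<rho> ?T (A, a)" if c: "fpt_in (A, a) ?T" for A a
    unfolding wdefends_iff
  proof (intro allI impI)
    fix b
    assume b: "fpt_in b (RR X E) \<and> suff_att \<rho> b (A, a)"
    have "wdefends Ar \<rho> E (A, a)"
      using adm c fpt_in_finter_SCC_iff[OF E] by (simp add: admissible_def)
    then obtain c' where c': "fpt_in c' E" "a \<le> min (snd c') (\<rho> (fst c') (fst b))"
      using b fpt_in_Rf_imp_Ar unfolding wdefends_iff by fastforce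
    have "fst c' \<in> Supp (SC X)"
    proof (rule ccontr)
      assume "fst c' \<notin> Supp (SC X)"
      moreover have "suff_att \<rho> c' b"
        using suff_att_by_weakener[of \<rho> b "(A, a)" c'] b c' c by (simp add: fpt_in_def)
      ultimately show False
        using not_suff_att_Rf_from_outside[OF E(2)] b c' by (metis prod.collapse)
    qed
    then have "fpt_in c' ?T"
      using c' fpt_in_finter_SCC_iff[OF E] by (metis prod.collapse)
    then show "\<exists>c. fpt_in c ?T \<and> snd (A, a) \<le> min (snd c) (\<rho> (fst c) (fst b))"
      using c'(2) by (intro exI[of _ c']) simp
  qed
  have TD: "fsubset ?T (DF X E)"
    unfolding fsubset_def
  proof
    fix x
    show "?T x \<le> DF X E x"
    proof (cases "0 < ?T x")
      case False
      then show ?thesis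
        using Df_nonneg[OF E(1)] by (metis not_less order_trans)
    next
      case True
      then have "fpt_in (x, ?T x) ?T"
        using T_fuzzy by (simp add: fpt_in_def is_fuzzy_set_def)
      then have "fpt_in (x, ?T x) E" "fpt_in (x, ?T x) (RR X E)"
        using fpt_in_mono TE TR by blast+
      moreover have "wdefends Ar \<rho> E (x, ?T x)"
        using adm calculation(1) by (simp add: admissible_def)
      ultimately have "D_good Ar \<rho> (SC X) E (x, ?T x)"
        unfolding D_good_def wdefends_def using fpt_in_outparents_imp_Ar by blast
      then show ?thesis
        using D_good_iff_le_Df[OF E(1) True] by simp
    qed
  qed
  have "admissible (RR X E) \<rho> ?T"
    using T_fuzzy TR conflict_free_mono[OF cf TE] defends by (auto simp: admissible_def)
  then have "admissible (RR X E) (restr \<rho> (RR X E)) ?T"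
    using admissible_restr[OF TR] by simp
  moreover have "fsubset ?T (finter (DF X E) C)"
    unfolding fsubset_def
  proof
    fix x
    have "?T x \<le> DF X E x" "?T x \<le> E x" "E x \<le> C x"
      using TD TE EC by (simp_all only: fsubset_def)
    then show "?T x \<le> finter (DF X E) C x"
      by (simp add: finter_def[of "DF X E"])
  qed
  ultimately show ?thesis
    by (simp add: AE_def)
qed

section \<open>Maximality\<close>

lemma admissible_glue:
  assumes E: "is_fuzzy_set E" "fsubset E Ar" and adm: "admissible Ar \<rho> E"
    and T: "admissible (RR X E) \<rho> T" "fsubset T (DF X E)" "fsubset (finter E (SC X)) T"
  defines "G \<equiv> \<lambda>x. if x \<in> Supp (SC X) then T x else E x"
  shows "fsubset E G" "admissible Ar \<rho> G"
proof -
  have T_R: "fsubset T (RR X E)" and T_fuzzy: "is_fuzzy_set T" and cfT: "conflict_free \<rho> T"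
    using T(1) by (auto simp: admissible_def)
  have cfE: "conflict_free \<rho> E"
    using adm by (simp add: admissible_def)
  have E_le_T: "E x \<le> T x" if "x \<in> Supp (SC X)" for x
    using spec[OF T(3)[unfolded fsubset_def], of x] finter_SCC[OF E, of X x] that by simp
  then show EG: "fsubset E G"
    by (simp add: G_def fsubset_def)
  have TG: "fsubset T G"
    using fsubset_Rf_outside[OF T_R T_fuzzy] E(1) by (simp add: G_def fsubset_def is_fuzzy_set_def)
  have G_fuzzy: "is_fuzzy_set G"
    using T_fuzzy E(1) by (simp add: G_def is_fuzzy_set_def)
  have G_Ar: "fsubset G Ar"
    using T_R E(2) Rf_le by (auto simp: G_def fsubset_def intro: order_trans)
  have G_cases: "(x \<in> Supp (SC X) \<and> fpt_in (x, v) T) \<or> (x \<notin> Supp (SC X) \<and> fpt_in (x, v) E)"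
    if "fpt_in (x, v) G" for x v
    using that by (auto simp: G_def fpt_in_def split: if_splits)
  have T_in_R: "fpt_in p (RR X E)" if "fpt_in p T" for p
    using that T_R fpt_in_mono by blast
  have not_att: "\<not> suff_att \<rho> (P, pv) (Q, qv)"
    if P: "fpt_in (P, pv) G" and Q: "fpt_in (Q, qv) G" for P pv Q qv
  proof
    assume att: "suff_att \<rho> (P, pv) (Q, qv)"
    consider "fpt_in (P, pv) T" "fpt_in (Q, qv) T"
      | "fpt_in (P, pv) E" "fpt_in (Q, qv) E"
      | "fpt_in (P, pv) E" "P \<notin> Supp (SC X)" "fpt_in (Q, qv) T"
      | "fpt_in (P, pv) T" "fpt_in (Q, qv) E"
      using G_cases[OF P] G_cases[OF Q] by blast
    then show False
    proof cases
      case 1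
      then show False
        using cfT att by (auto simp: conflict_free_def)
    next
      case 2
      then show False
        using cfE att by (auto simp: conflict_free_def)
    next
      case 3
      then show False
        using not_suff_att_Rf_from_outside[OF E(2) 3(1,2) T_in_R[OF 3(3)]] att by blast
    next
      case 4
      have "wdefends Ar \<rho> E (Q, qv)"
        using adm 4(2) by (simp add: admissible_def)
      moreover have "fpt_in (P, pv) Ar"
        using fpt_in_Rf_imp_Ar T_in_R 4(1) by blast
      ultimately obtain c where c: "fpt_in c E" "qv \<le> min (snd c) (\<rho> (fst c) P)"
        using att unfolding wdefends_iff by fastforce
      have "suff_att \<rho> c (P, pv)"
        using suff_att_by_weakener[OF att] c 4(2) by (simp add: fpt_in_def)
      show False
      proof (cases "fst c \<in> Supp (SC X)")
        case True
        then have "fpt_in c T"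
          using c(1) E_le_T by (auto simp: fpt_in_def intro: order_trans)
        then show False
          using cfT 4(1) \<open>suff_att \<rho> c (P, pv)\<close> unfolding conflict_free_def by blast
      next
        case False
        then show False
          using not_suff_att_Rf_from_outside[OF E(2) _ False T_in_R[OF 4(1)]] c(1)
            \<open>suff_att \<rho> c (P, pv)\<close> by (metis prod.collapse)
      qed
    qed
  qed
  have "wdefends Ar \<rho> G (A, a)" if "fpt_in (A, a) G" for A a
    using G_cases[OF that]
  proof
    assume "A \<in> Supp (SC X) \<and> fpt_in (A, a) T"
    then show ?thesis
      using wdefends_from_component[OF E T(1,2) EG TG] by blast
  next
    assume "A \<notin> Supp (SC X) \<and> fpt_in (A, a) E"
    then have "wdefends Ar \<rho> E (A, a)"
      using adm by (simp add: admissible_def)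
    then show ?thesis
      using EG wdefends_mono by blast
  qed
  then show "admissible Ar \<rho> G"
    using G_fuzzy G_Ar not_att by (auto simp: admissible_def conflict_free_def)
qed

lemma finter_SCC_maximal:
  assumes E: "is_fuzzy_set E" "fsubset E Ar" and P: "E \<in> PE Ar \<rho> C"
    and T: "T \<in> AE (RR X E) (restr \<rho> (RR X E)) (finter (DF X E) C)"
    and ET: "fsubset (finter E (SC X)) T"
  shows "T = finter E (SC X)"
proof -
  have adm: "admissible Ar \<rho> E" and EC: "fsubset E C"
    using P by (auto simp: PE_def AE_def)
  have T_R: "fsubset T (RR X E)" and T_fuzzy: "is_fuzzy_set T"
    using T by (auto simp: AE_def admissible_def)
  have T_adm: "admissible (RR X E) \<rho> T"
    using T admissible_restr[OF T_R] by (simp add: AE_def)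
  have TD: "fsubset T (DF X E)" and TC: "fsubset T C"
    using T by (auto simp: AE_def fsubset_def finter_def)
  define G where "G = (\<lambda>x. if x \<in> Supp (SC X) then T x else E x)"
  have "fsubset E G" "admissible Ar \<rho> G"
    using admissible_glue[OF E adm T_adm TD ET] unfolding G_def by blast+
  moreover have "fsubset G C"
    using TC EC by (simp add: G_def fsubset_def)
  ultimately have "G = E"
    using P by (auto simp: PE_def AE_def)
  then show ?thesis
    using fsubset_Rf_outside[OF T_R T_fuzzy] finter_SCC[OF E]
    by (auto simp: G_def fun_eq_iff split: if_splits)
qed

lemma admissible_of_components:
  assumes E: "is_fuzzy_set E" "fsubset E Ar"
    and comp: "\<And>X. finter E (SC X) \<in> AE (RR X E) (restr \<rho> (RR X E)) (finter (DF X E) C)"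
  shows "admissible Ar \<rho> E" "fsubset E C"
proof -
  have T_R: "fsubset (finter E (SC X)) (RR X E)" for X
    using comp[of X] by (simp add: AE_def admissible_def)
  have T_adm: "admissible (RR X E) \<rho> (finter E (SC X))"
    and TD: "fsubset (finter E (SC X)) (DF X E)"
    and TC: "fsubset (finter E (SC X)) C" for X
    using comp[of X] admissible_restr[OF T_R] by (auto simp: AE_def fsubset_def finter_def[of "DF X E"])
  have own: "fpt_in (x, v) (finter E (SC x))" if "fpt_in (x, v) E" for x v
    using that finter_own_SCC[OF E, of x] by (simp add: fpt_in_def)
  show "fsubset E C"
    using TC finter_own_SCC[OF E] by (metis fsubset_def)
  have not_att: "\<not> suff_att \<rho> (P, pv) (Q, qv)" if "fpt_in (P, pv) E" "fpt_in (Q, qv) E" for P pv Q qv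
  proof (cases "P \<in> Supp (SC Q)")
    case True
    then have "fpt_in (P, pv) (finter E (SC Q))"
      using that(1) fpt_in_finter_SCC_iff[OF E] by blast
    then show ?thesis
      using T_adm[of Q] own[OF that(2)] by (auto simp: admissible_def conflict_free_def)
  next
    case False
    then show ?thesis
      using not_suff_att_Rf_from_outside[OF E(2) that(1)] own[OF that(2)] T_R fpt_in_mono by blast
  qed
  have "wdefends Ar \<rho> E (A, a)" if "fpt_in (A, a) E" for A a
    using wdefends_from_component[OF E T_adm TD _ _ own[OF that]] by (simp add: fsubset_def finter_def)
  then show "admissible Ar \<rho> E"
    using E not_att by (auto simp: admissible_def conflict_free_def)
qed

definition upstream :: "'a \<Rightarrow> 'a set" where
  "upstream X = {Y. (Y, X) \<in> (att_rel \<rho>)\<^sup>+ \<and> \<not> path_equiv \<rho> Y X}"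

lemma att_rel_iff: "(x, y) \<in> att_rel \<rho> \<longleftrightarrow> 0 < \<rho> x y"
  by (simp add: att_rel_def)

lemma ancestors_psubset:
  assumes "Y \<in> upstream X"
  shows "{Z. (Z, Y) \<in> (att_rel \<rho>)\<^sup>*} \<subset> {Z. (Z, X) \<in> (att_rel \<rho>)\<^sup>*}"
proof -
  have YX: "(Y, X) \<in> (att_rel \<rho>)\<^sup>+" and "\<not> path_equiv \<rho> Y X"
    using assms by (auto simp: upstream_def)
  then have "(X, Y) \<notin> (att_rel \<rho>)\<^sup>*"
    by (auto simp: path_equiv_def rtrancl_eq_or_trancl)
  then show ?thesis
    using YX by (auto intro: rtrancl_trans)
qed

lemma ex_minimal_upstream:
  assumes "P X0"
  shows "\<exists>X. P X \<and> (\<forall>Y \<in> upstream X. \<not> P Y)"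
proof -
  let ?n = "\<lambda>x. card {Z. (Z, x) \<in> (att_rel \<rho>)\<^sup>*}"
  obtain X where "P X" and min: "\<And>Y. P Y \<Longrightarrow> ?n X \<le> ?n Y"
    using ex_has_least_nat[of P X0 ?n] assms by blast
  have "?n Y < ?n X" if "Y \<in> upstream X" for Y
    using ancestors_psubset[OF that] finite_args by (meson psubset_card_mono finite_subset subset_UNIV)
  then show ?thesis
    using \<open>P X\<close> min by fastforce
qed

lemma outparent_upstream:
  assumes "0 < OP X B"
  shows "B \<in> upstream X"
proof -
  obtain A where A: "A \<in> Supp (SC X)" "0 < \<rho> B A"
    using outparents_posD(3)[OF assms] by blast
  have "(A, X) \<in> (att_rel \<rho>)\<^sup>*"
    using A(1) by (auto simp: Supp_SCC path_equiv_def)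
  then have "(B, X) \<in> (att_rel \<rho>)\<^sup>+"
    using A(2) by (simp add: att_rel_iff rtrancl_into_trancl2)
  moreover have "B \<notin> Supp (SC X)" "0 < Ar B"
    using outparents_posD(1,2)[OF assms] assms by auto
  then have "\<not> path_equiv \<rho> B X"
    by (simp add: Supp_SCC)
  ultimately show ?thesis
    by (simp add: upstream_def)
qed

lemma attacker_of_outparent_upstream:
  assumes "0 < OP X B" "0 < \<rho> C B"
  shows "C \<in> upstream X"
proof -
  have BX: "(B, X) \<in> (att_rel \<rho>)\<^sup>+" "\<not> path_equiv \<rho> B X"
    using outparent_upstream[OF assms(1)] by (auto simp: upstream_def)
  have CB: "(C, B) \<in> att_rel \<rho>"
    using assms(2) by (simp add: att_rel_iff)
  have "\<not> path_equiv \<rho> C X"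
  proof
    assume "path_equiv \<rho> C X"
    then have "(X, C) \<in> (att_rel \<rho>)\<^sup>*"
      by (auto simp: path_equiv_def)
    then have "(X, B) \<in> (att_rel \<rho>)\<^sup>+"
      using CB by (rule rtrancl_into_trancl1)
    then show False
      using BX by (simp add: path_equiv_def)
  qed
  then show ?thesis
    using BX(1) CB by (simp add: upstream_def trancl_into_trancl2)
qed

lemma Rf_eq_if_agree_upstream:
  assumes "is_fuzzy_set E" "is_fuzzy_set E'" and agree: "\<And>Y. Y \<in> upstream X \<Longrightarrow> E' Y = E Y"
  shows "RR X E' = RR X E"
proof -
  have "finter E' (OP X) B = finter E (OP X) B" for B
  proof (cases "0 < OP X B")
    case True
    then show ?thesis
      using agree outparent_upstream by (simp add: finter_def)
  next
    case False
    then have "OP X B = 0"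
      using outparents_le[of "SC X" B] Ar_nonneg[of B] by (auto simp: outparents_def split: if_splits)
    then show ?thesis
      using assms(1,2) by (simp add: finter_def is_fuzzy_set_def)
  qed
  then have "finter E' (OP X) = finter E (OP X)" ..
  then show ?thesis
    by (simp only: Rf_def Lf_def)
qed

lemma D_good_if_agree_upstream:
  assumes R: "RR X E' = RR X E" and agree: "\<And>Y. Y \<in> upstream X \<Longrightarrow> E' Y = E Y"
    and good: "D_good Ar \<rho> (SC X) E (A, a)"
  shows "D_good Ar \<rho> (SC X) E' (A, a)"
  unfolding D_good_iff R
proof (intro conjI allI impI)
  show "fpt_in (A, a) (RR X E)"
    using good by (simp add: D_good_def)
next
  fix b
  assume b: "fpt_in b (OP X) \<and> suff_att \<rho> b (A, a)"
  then obtain c where c: "fpt_in c E" "a \<le> min (snd c) (\<rho> (fst c) (fst b))"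
    using good unfolding D_good_iff by fastforce
  have "0 < a"
    using good by (simp add: D_good_def fpt_in_def)
  then have "0 < \<rho> (fst c) (fst b)"
    using c(2) by simp
  moreover have "0 < OP X (fst b)"
    using b by (auto simp: fpt_in_def)
  ultimately have "fst c \<in> upstream X"
    using attacker_of_outparent_upstream by blast
  then have "fpt_in c E'"
    using c(1) agree by (simp add: fpt_in_def)
  then show "\<exists>c. fpt_in c E' \<and> snd (A, a) \<le> min (snd c) (\<rho> (fst c) (fst b))"
    using c(2) by (intro exI[of _ c]) simp
qed

lemma Df_eq_if_agree_upstream:
  assumes "is_fuzzy_set E" "is_fuzzy_set E'" and agree: "\<And>Y. Y \<in> upstream X \<Longrightarrow> E' Y = E Y"
  shows "DF X E' = DF X E"
proof -
  have R: "RR X E' = RR X E"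
    by (rule Rf_eq_if_agree_upstream[OF assms])
  have "D_good Ar \<rho> (SC X) E' p \<longleftrightarrow> D_good Ar \<rho> (SC X) E p" for p
    using D_good_if_agree_upstream[OF R agree] D_good_if_agree_upstream[OF R[symmetric]] agree
    by (cases p) (metis)
  then have "D_good Ar \<rho> (SC X) E' = D_good Ar \<rho> (SC X) E" ..
  then show ?thesis
    by (simp only: Df_def)
qed

lemma maximal_if_components_maximal:
  assumes E: "is_fuzzy_set E" "fsubset E Ar"
    and comp: "\<And>X. finter E (SC X) \<in> PE (RR X E) (restr \<rho> (RR X E)) (finter (DF X E) C)"
    and E': "E' \<in> AE Ar \<rho> C" "fsubset E E'"
  shows "E' = E"
proof (rule ccontr)
  assume "E' \<noteq> E"
  then obtain X where diff: "E' X \<noteq> E X" and agree: "\<And>Y. Y \<in> upstream X \<Longrightarrow> E' Y = E Y"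
    using ex_minimal_upstream[of "\<lambda>x. E' x \<noteq> E x"] by fastforce
  have adm': "admissible Ar \<rho> E'" and E'C: "fsubset E' C"
    using E'(1) by (auto simp: AE_def)
  then have E'_fuzzy: "is_fuzzy_set E'" and E'_Ar: "fsubset E' Ar"
    by (auto simp: admissible_def)
  have "finter E' (SC X) \<in> AE (RR X E') (restr \<rho> (RR X E')) (finter (DF X E') C)"
    by (rule finter_SCC_in_AE[OF E'_fuzzy E'_Ar adm' E'C])
  then have "finter E' (SC X) \<in> AE (RR X E) (restr \<rho> (RR X E)) (finter (DF X E) C)"
    using Rf_eq_if_agree_upstream[OF E(1) E'_fuzzy agree] Df_eq_if_agree_upstream[OF E(1) E'_fuzzy agree]
    by simp
  moreover have "fsubset (finter E (SC X)) (finter E' (SC X))"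
    using E'(2) unfolding fsubset_def finter_def by (metis min.mono order_refl)
  ultimately have "finter E' (SC X) = finter E (SC X)"
    using comp[of X] by (auto simp: PE_def)
  then have "E' X = E X"
    using finter_own_SCC[OF E] finter_own_SCC[OF E'_fuzzy E'_Ar] by metis
  then show False
    using diff by contradiction
qed

theorem PE_iff_components_PE:
  assumes E: "is_fuzzy_set E" "fsubset E Ar"
  shows "E \<in> PE Ar \<rho> C \<longleftrightarrow>
    (\<forall>X. finter E (SC X) \<in> PE (RR X E) (restr \<rho> (RR X E)) (finter (DF X E) C))"
proof
  assume P: "E \<in> PE Ar \<rho> C"
  then have "admissible Ar \<rho> E" "fsubset E C"
    by (auto simp: PE_def AE_def)
  then show "\<forall>X. finter E (SC X) \<in> PE (RR X E) (restr \<rho> (RR X E)) (finter (DF X E) C)"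
    using finter_SCC_in_AE[OF E] finter_SCC_maximal[OF E P] by (auto simp: PE_def)
next
  assume comp: "\<forall>X. finter E (SC X) \<in> PE (RR X E) (restr \<rho> (RR X E)) (finter (DF X E) C)"
  then have comp_AE: "finter E (SC X) \<in> AE (RR X E) (restr \<rho> (RR X E)) (finter (DF X E) C)" for X
    by (simp add: PE_def)
  have "E \<in> AE Ar \<rho> C"
    using admissible_of_components[OF E comp_AE] by (simp add: AE_def)
  then show "E \<in> PE Ar \<rho> C"
    using maximal_if_components_maximal[OF E] comp by (auto simp: PE_def)
qed

end

theorem mainTheorem6:
  fixes Ar :: "'a fset" and \<rho> :: "'a attrel" and E :: "'a fset"
  assumes "finite (UNIV :: 'a set)"
    and "is_FAF Ar \<rho>"
    and "is_fuzzy_set E" and "fsubset E Ar"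
  shows "\<forall>C. is_fuzzy_set C \<and> fsubset C Ar \<longrightarrow>
           (E \<in> PE Ar \<rho> C \<longleftrightarrow>
              (\<forall>S \<in> SCCS Ar \<rho>.
                 finter E S \<in> PE (Rf Ar \<rho> S E) (restr \<rho> (Rf Ar \<rho> S E))
                                  (finter (Df Ar \<rho> S E) C)))"
proof -
  interpret finite_faf Ar \<rho>
    using assms(1,2) by unfold_locales
  show ?thesis
    using PE_iff_components_PE[OF assms(3,4)] by (simp add: SCCS_def)
qed

end
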